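(* There is an absolute constant $c>0$ such that for all integers $k\ge1$, all $n\le m$ and every $k$-monotone sequence $X\in[n]^m$, $\mathsf{F}^{k}(X)\le c\,k\cdot|X|$.
   Context: A sequence $X\in[n]^m$ is $k$-monotone if it can be partitioned into $k$ (not necessarily contiguous) subsequences that are all increasing or all decreasing. Standing assumption: $m\ge n$. $k$-finger cost: for a static BST $T$ on $[n]$, $d_T(a,b)$ is the number of edges between $a$ and $b$ in $T$. A $k$-finger strategy is an initial vector $\vec\ell\in[n]^k$ and $\vec f\in[k]^m$, finger $f_t$ serving $x_t$, with cost $\sum_{t=1}^m(1+d_T(x_t,p_t))$ where $p_t$ is the position of finger $f_t$ before time $t$ (its last served key, or $\ell_{f_t}$). $\mathsf{F}^k_T(X)$ is the minimum such cost and $\mathsf{F}^k(X)=\min_T\mathsf{F}^k_T(X)$ over BSTs $T$ on $[n]$. *)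

theory Defs
  imports Complex_Main "HOL-Library.Tree"
begin

definition is_bst_on :: "nat \<Rightarrow> nat tree \<Rightarrow> bool" where
  "is_bst_on n T \<longleftrightarrow> inorder T = [1..<n+1]"

fun search_path :: "nat tree \<Rightarrow> nat \<Rightarrow> nat list" where
  "search_path Leaf a = []"
| "search_path (Node l x r) a =
     x # (if a < x then search_path l a else if x < a then search_path r a else [])"

text \<open>Number of edges between keys a and b in T: the path a -- lca -- b consists of the
  nodes on exactly one of the two root paths plus the lca.\<close>
definition tdist :: "nat tree \<Rightarrow> nat \<Rightarrow> nat \<Rightarrow> nat" where
  "tdist T a b = card (set (search_path T a) - set (search_path T b))
               + card (set (search_path T b) - set (search_path T a))"

fun finger_cost :: "nat tree \<Rightarrow> (nat \<Rightarrow> nat) \<Rightarrow> nat list \<Rightarrow> nat list \<Rightarrow> nat" where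
  "finger_cost T pos (x # xs) (f # fs) = 1 + tdist T x (pos f) + finger_cost T (pos(f := x)) xs fs"
| "finger_cost T pos _ _ = 0"

definition Fk_T :: "nat \<Rightarrow> nat \<Rightarrow> nat tree \<Rightarrow> nat list \<Rightarrow> nat" where
  "Fk_T k n T X = (LEAST c. \<exists>l fs. (\<forall>i<k. l i \<in> {1..n}) \<and> length fs = length X
                        \<and> set fs \<subseteq> {0..<k} \<and> c = finger_cost T l X fs)"

definition Fk :: "nat \<Rightarrow> nat \<Rightarrow> nat list \<Rightarrow> nat" where
  "Fk k n X = (LEAST c. \<exists>T. is_bst_on n T \<and> c = Fk_T k n T X)"

definition k_monotone :: "nat \<Rightarrow> nat list \<Rightarrow> bool" where
  "k_monotone k X \<longleftrightarrow> (\<exists>g. (\<forall>t<length X. g t < k) \<and>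
     ((\<forall>i j. i < j \<and> j < length X \<and> g i = g j \<longrightarrow> X ! i \<le> X ! j) \<or>
      (\<forall>i j. i < j \<and> j < length X \<and> g i = g j \<longrightarrow> X ! i \<ge> X ! j)))"

end

(*
  Store the keys on a path: the tree in which every node has only a right child. Its tree
  distance is the line distance |a - b|. Colour the accesses as in the k-monotone
  decomposition and let finger i serve colour i, all fingers starting at key 1 in the
  increasing case and at key n in the decreasing case. Each finger then only moves in one
  direction, so its total travel is below n, and the cost is at most m + k n <= 2 k m.
*)
theory Submission
  imports Defs
begin

fun right_spine :: "nat \<Rightarrow> nat \<Rightarrow> nat tree" where
  "right_spine i 0 = Leaf"
| "right_spine i (Suc j) = Node Leaf i (right_spine (Suc i) j)"

lemma inorder_right_spine: "inorder (right_spine i j) = [i..<i+j]"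
  by (induction j arbitrary: i) (auto simp: upt_conv_Cons)

lemma is_bst_on_right_spine: "is_bst_on n (right_spine 1 n)"
  unfolding is_bst_on_def by (simp add: inorder_right_spine)

lemma set_search_path_right_spine:
  "i \<le> a \<Longrightarrow> a < i + j \<Longrightarrow> set (search_path (right_spine i j) a) = {i..a}"
proof (induction j arbitrary: i)
  case 0
  then show ?case by simp
next
  case (Suc j)
  then show ?case
    by (cases "i < a") (auto simp: Suc.IH[of "Suc i"] atLeastAtMost_insertL)
qed

lemma tdist_right_spine:
  assumes "a \<in> {1..n}" "b \<in> {1..n}"
  shows "tdist (right_spine 1 n) a b = (a - b) + (b - a)"
proof -
  have "{1..a} - {1..b} = {Suc b..a}" "{1..b} - {1..a} = {Suc a..b}" by auto
  then show ?thesis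
    using assms by (simp add: tdist_def set_search_path_right_spine)
qed

lemma sum_fun_upd_add:
  fixes h :: "'a \<Rightarrow> 'b::comm_monoid_add"
  assumes "finite A" "a \<in> A"
  shows "sum (h(a := y)) A + h a = sum h A + y"
proof -
  have "sum (h(a := y)) (A - {a}) = sum h (A - {a})"
    by (rule sum.cong) auto
  then show ?thesis
    using assms by (simp add: sum.remove add_ac)
qed

fun fingers_monotone :: "(nat \<Rightarrow> nat \<Rightarrow> bool) \<Rightarrow> (nat \<Rightarrow> nat) \<Rightarrow> nat list \<Rightarrow> nat list \<Rightarrow> bool" where
  "fingers_monotone R pos (x # xs) (f # fs) \<longleftrightarrow> R (pos f) x \<and> fingers_monotone R (pos(f := x)) xs fs"
| "fingers_monotone R pos _ _ \<longleftrightarrow> True"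

lemma fingers_monotoneI:
  assumes "\<forall>t<length xs. R (pos (fs ! t)) (xs ! t)"
    and "\<forall>s t. s < t \<and> t < length xs \<and> fs ! s = fs ! t \<longrightarrow> R (xs ! s) (xs ! t)"
  shows "fingers_monotone R pos xs fs"
  using assms
proof (induction xs arbitrary: pos fs)
  case Nil
  then show ?case by simp
next
  case (Cons x xs)
  show ?case
  proof (cases fs)
    case Nil
    then show ?thesis by simp
  next
    case (Cons f fs')
    have "fingers_monotone R (pos(f := x)) xs fs'"
    proof (rule Cons.IH)
      show "\<forall>t<length xs. R ((pos(f := x)) (fs' ! t)) (xs ! t)"
      proof (intro allI impI)
        fix t assume "t < length xs"
        then show "R ((pos(f := x)) (fs' ! t)) (xs ! t)"
          using Cons.prems[THEN spec, of "Suc t"] Cons.prems(2)[rule_format, of 0 "Suc t"]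
            \<open>fs = f # fs'\<close> by (cases "fs' ! t = f") auto
      qed
      show "\<forall>s t. s < t \<and> t < length xs \<and> fs' ! s = fs' ! t \<longrightarrow> R (xs ! s) (xs ! t)"
        using Cons.prems(2) \<open>fs = f # fs'\<close> by (metis Suc_less_eq length_Cons nth_Cons_Suc)
    qed
    then show ?thesis
      using Cons.prems(1) \<open>fs = f # fs'\<close> by auto
  qed
qed

lemma finger_cost_le_potential:
  fixes \<phi> :: "nat \<Rightarrow> nat"
  assumes potential: "\<And>a b. a \<in> A \<Longrightarrow> b \<in> A \<Longrightarrow> R a b \<Longrightarrow> tdist T b a + \<phi> b \<le> \<phi> a"
    and "set xs \<subseteq> A" "\<forall>f<k. pos f \<in> A" "set fs \<subseteq> {..<k}"
    and "fingers_monotone R pos xs fs"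
  shows "finger_cost T pos xs fs \<le> length xs + (\<Sum>f<k. \<phi> (pos f))"
  using assms(2-)
proof (induction xs arbitrary: pos fs)
  case Nil
  then show ?case by simp
next
  case (Cons x xs)
  show ?case
  proof (cases fs)
    case Nil
    then show ?thesis by simp
  next
    case (Cons f fs')
    let ?pos' = "pos(f := x)"
    have f: "f < k" and x: "x \<in> A" and R: "R (pos f) x"
      using Cons.prems \<open>fs = f # fs'\<close> by auto
    have step: "tdist T x (pos f) + \<phi> x \<le> \<phi> (pos f)"
      using potential[OF _ x R] Cons.prems(2) f by blast
    have IH: "finger_cost T ?pos' xs fs' \<le> length xs + (\<Sum>g<k. \<phi> (?pos' g))"
      using Cons.prems x \<open>fs = f # fs'\<close> by (intro Cons.IH) (auto simp: fun_upd_def)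
    have "(\<Sum>g<k. \<phi> (?pos' g)) + \<phi> (pos f) = (\<Sum>g<k. \<phi> (pos g)) + \<phi> x"
      using sum_fun_upd_add[of "{..<k}" f "\<lambda>g. \<phi> (pos g)" "\<phi> x"] f
      by (simp add: fun_upd_def if_distrib)
    then show ?thesis
      using IH step \<open>fs = f # fs'\<close> by simp
  qed
qed

lemma Fk_le_finger_cost:
  assumes "is_bst_on n T" "\<forall>i<k. l i \<in> {1..n}" "length fs = length X" "set fs \<subseteq> {0..<k}"
  shows "Fk k n X \<le> finger_cost T l X fs"
proof -
  have "Fk k n X \<le> Fk_T k n T X"
    unfolding Fk_def by (rule Least_le) (use assms in blast)
  also have "\<dots> \<le> finger_cost T l X fs"
    unfolding Fk_T_def by (rule Least_le) (use assms in blast)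
  finally show ?thesis .
qed

lemma Fk_k_monotone_le:
  assumes "k_monotone k X" "set X \<subseteq> {1..n}" "1 \<le> n"
  shows "Fk k n X \<le> length X + k * n"
proof -
  obtain g where g: "\<forall>t<length X. g t < k"
    and colour_chains: "(\<forall>i j. i < j \<and> j < length X \<and> g i = g j \<longrightarrow> X ! i \<le> X ! j) \<or>
      (\<forall>i j. i < j \<and> j < length X \<and> g i = g j \<longrightarrow> X ! i \<ge> X ! j)"
    using assms(1) unfolding k_monotone_def by blast
  define fs where "fs = map g [0..<length X]"
  have fs: "length fs = length X" "set fs \<subseteq> {0..<k}" "\<forall>t<length X. fs ! t = g t"
    using g by (auto simp: fs_def)
  have X: "\<forall>t<length X. X ! t \<in> {1..n}"
    using assms(2) nth_mem by blast
  have bst: "is_bst_on n (right_spine 1 n)"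
    by (rule is_bst_on_right_spine)
  have tdist: "tdist (right_spine 1 n) b a = (a - b) + (b - a)" if "a \<in> {1..n}" "b \<in> {1..n}" for a b
    using tdist_right_spine[OF that(2,1)] by simp
  from colour_chains show ?thesis
  proof
    assume inc: "\<forall>i j. i < j \<and> j < length X \<and> g i = g j \<longrightarrow> X ! i \<le> X ! j"
    have "Fk k n X \<le> finger_cost (right_spine 1 n) (\<lambda>_. 1) X fs"
      using Fk_le_finger_cost[OF bst _ fs(1,2)] assms(3) by simp
    also have "\<dots> \<le> length X + (\<Sum>f<k. n - 1)"
      by (rule finger_cost_le_potential[where A = "{1..n}" and R = "(\<le>)" and \<phi> = "\<lambda>a. n - a"])
        (use tdist assms(2,3) fs X inc in \<open>auto intro!: fingers_monotoneI\<close>)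
    also have "\<dots> \<le> length X + k * n"
      by (simp add: mult_le_mono2)
    finally show ?thesis .
  next
    assume dec: "\<forall>i j. i < j \<and> j < length X \<and> g i = g j \<longrightarrow> X ! i \<ge> X ! j"
    have "Fk k n X \<le> finger_cost (right_spine 1 n) (\<lambda>_. n) X fs"
      using Fk_le_finger_cost[OF bst _ fs(1,2)] assms(3) by simp
    also have "\<dots> \<le> length X + (\<Sum>f<k. n)"
      by (rule finger_cost_le_potential[where A = "{1..n}" and R = "(\<ge>)" and \<phi> = "\<lambda>a. a"])
        (use tdist assms(2,3) fs X dec in \<open>auto intro!: fingers_monotoneI\<close>)
    finally show ?thesis by simp
  qed
qed

theorem theorem11:
  shows "\<exists>c::real. c > 0 \<and>
    (\<forall>k n m (X :: nat list). k \<ge> 1 \<longrightarrow> 1 \<le> n \<longrightarrow> n \<le> m \<longrightarrow> length X = m \<longrightarrow>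
       set X \<subseteq> {1..n} \<longrightarrow> k_monotone k X \<longrightarrow>
       real (Fk k n X) \<le> c * real k * real (length X))"
proof (intro exI[of _ 2] conjI allI impI)
  fix k n m :: nat and X :: "nat list"
  assume "k \<ge> 1" "1 \<le> n" "n \<le> m" "length X = m" "set X \<subseteq> {1..n}" "k_monotone k X"
  then have "Fk k n X \<le> m + k * m"
    using Fk_k_monotone_le[of k X n] mult_le_mono2[of n m k] by linarith
  also have "\<dots> \<le> 2 * k * m"
    using \<open>k \<ge> 1\<close> by simp
  finally show "real (Fk k n X) \<le> 2 * real k * real (length X)"
    using \<open>length X = m\<close> by (metis of_nat_le_iff of_nat_mult of_nat_numeral)
qed simp

end
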